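(* For every pair of integers $k \geqslant 2$ and $\ell \geqslant 0$ there exists a direction-determinate 2DFA with set of states $Q = Q^+ \cup Q^-$, where $|Q^+| = k$ and $|Q^-| = \ell$, which accepts at least one string and whose shortest accepted string has length exactly $\binom{k+\ell}{\ell+1} - 1$.
   Context: A two-way deterministic finite automaton (2DFA) is a quintuple $(\Sigma, Q, q_0, \delta, F)$ where $\Sigma$ is a finite alphabet not containing the end-markers $\vdash$ and $\dashv$, $Q$ is a finite set of states, $q_0 \in Q$ is the initial state, $\delta: Q \times (\Sigma \cup \{\vdash, \dashv\}) \to Q \times \{-1,+1\}$ is a partial transition function, and $F \subseteq Q$ is the set of accepting states. On input $w = a_1 \cdots a_m \in \Sigma^*$ the automaton works on the tape $\vdash a_1 \cdots a_m \dashv$, starting at $\vdash$ in state $q_0$; in state $q$ reading symbol $c$, if $\delta(q,c) = (r,d)$ it enters state $r$ and moves one cell in direction $d$ ($-1$ left, $+1$ right); if $\delta(q,c)$ is undefined it rejects. It accepts $w$ if it ever arrives at $\dashv$ in a state from $F$; it may also loop forever (not accepting). The number of states of the automaton is $|Q|$. A 2DFA is direction-determinate if there is a partition $Q = Q^+ \cup Q^-$, $Q^+ \cap Q^- = \emptyset$, such that every transition $\delta(q,c) = (r,+1)$ has $r \in Q^+$ and every transition $\delta(q,c) = (r,-1)$ has $r \in Q^-$. *)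

theory Defs
  imports Main
begin

datatype 'a tsym = LEnd | REnd | Sym 'a

record tdfa =
  alph   :: "nat set"
  states :: "nat set"
  init   :: nat
  trans  :: "nat \<Rightarrow> nat tsym \<Rightarrow> (nat \<times> int) option"
  final  :: "nat set"

definition tape_syms :: "tdfa \<Rightarrow> nat tsym set" where
  "tape_syms A = {LEnd, REnd} \<union> Sym ` alph A"

definition wf_tdfa :: "tdfa \<Rightarrow> bool" where
  "wf_tdfa A \<longleftrightarrow> finite (alph A) \<and> finite (states A) \<and> init A \<in> states A
     \<and> final A \<subseteq> states A
     \<and> (\<forall>q c r d. trans A q c = Some (r, d) \<longrightarrow>
            q \<in> states A \<and> c \<in> tape_syms A \<and> r \<in> states A \<and> d \<in> {-1, 1})"

definition tape :: "nat list \<Rightarrow> nat \<Rightarrow> nat tsym" where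
  "tape w i = (if i = 0 then LEnd else if i = Suc (length w) then REnd else Sym (w ! (i - 1)))"

text \<open>One computation step on input w between configurations (state, head position).
  A move off the tape is not a step (the run stops, rejecting).\<close>
definition step :: "tdfa \<Rightarrow> nat list \<Rightarrow> nat \<times> nat \<Rightarrow> nat \<times> nat \<Rightarrow> bool" where
  "step A w c c' \<longleftrightarrow> (\<exists>q i r d. c = (q, i) \<and> i \<le> Suc (length w)
      \<and> trans A q (tape w i) = Some (r, d)
      \<and> 0 \<le> int i + d \<and> int i + d \<le> int (Suc (length w))
      \<and> c' = (r, nat (int i + d)))"

definition accepts :: "tdfa \<Rightarrow> nat list \<Rightarrow> bool" where
  "accepts A w \<longleftrightarrow> w \<in> lists (alph A) \<and>
     (\<exists>q. q \<in> final A \<and> (step A w)\<^sup>*\<^sup>* (init A, 0) (q, Suc (length w)))"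

definition direction_determinate_wrt :: "tdfa \<Rightarrow> nat set \<Rightarrow> nat set \<Rightarrow> bool" where
  "direction_determinate_wrt A Qp Qm \<longleftrightarrow> Qp \<union> Qm = states A \<and> Qp \<inter> Qm = {}
     \<and> (\<forall>q c r. trans A q c = Some (r, 1) \<longrightarrow> r \<in> Qp)
     \<and> (\<forall>q c r. trans A q c = Some (r, -1) \<longrightarrow> r \<in> Qm)"

end

theory Submission
  imports Defs "HOL-Library.List_Lexorder"
begin

text \<open>Call \<open>p\<^sub>1 q\<^sub>1 p\<^sub>2 q\<^sub>2 \<dots> p\<^sub>n\<close> alternating if the \<open>p\<^sub>i\<close> are increasing \<open>+\<close>-states and the \<open>q\<^sub>i\<close> are
  decreasing \<open>-\<close>-states. Such a sequence is determined by its set, and keeping the \<open>p\<^sub>i\<close> while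
  complementing the \<open>q\<^sub>i\<close> is a bijection onto the \<open>(l + 1)\<close>-subsets of the states, so there are
  \<open>N + 1 = (k + l choose l + 1)\<close> of them; list them lexicographically as
  \<open>W\<^sub>0 = [0] < \<dots> < W\<^sub>N = [k - 1]\<close>. Letter \<open>i\<close> of the automaton is built so that on the input
  \<open>0 1 \<dots> (N - 1)\<close> the crossing sequence at the boundary before letter \<open>i\<close> is \<open>W\<^sub>i\<close>.
  Conversely, on any accepted input the states crossing a boundary form some \<open>W\<^sub>j\<close>, and across
  letter \<open>i\<close> these sequences are restrictions of \<open>W\<^sub>i\<close> and of \<open>W\<^sub>i\<^sub>+\<^sub>1\<close>. A restriction of \<open>W\<^sub>i\<close> is
  lexicographically at least \<open>W\<^sub>i\<close>, one of \<open>W\<^sub>i\<^sub>+\<^sub>1\<close> at most \<open>W\<^sub>i\<^sub>+\<^sub>1\<close>, so the index grows by at most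
  one per letter, and reaching \<open>W\<^sub>N\<close> at the right end-marker takes at least \<open>N\<close> letters.\<close>

text \<open>Read as consecutive pairs, an alternating sequence \<open>u = p\<^sub>1 q\<^sub>1 \<dots> p\<^sub>n\<close> has
  \<open>pair_lookup u p\<^sub>i = Some q\<^sub>i\<close> and \<open>pair_lookup (tl u) q\<^sub>i = Some p\<^sub>i\<^sub>+\<^sub>1\<close>.\<close>
fun pair_lookup :: "nat list \<Rightarrow> nat \<Rightarrow> nat option" where
  "pair_lookup (x # y # r) s = (if s = x then Some y else pair_lookup r s)"
| "pair_lookup _ s = None"

fun keep_pairs :: "nat set \<Rightarrow> nat list \<Rightarrow> nat list" where
  "keep_pairs P (a # b # r) = (if a \<in> P then a # b # keep_pairs P r else keep_pairs P r)"
| "keep_pairs P [a] = (if a \<in> P then [a] else [])"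
| "keep_pairs P [] = []"

lemma pair_lookup_set: "pair_lookup u s = Some b \<Longrightarrow> s \<in> set u \<and> b \<in> set u"
  by (induction u s rule: pair_lookup.induct) (auto split: if_splits)

lemma keep_pairs_subset: "set (keep_pairs P u) \<subseteq> set u"
  by (induction P u rule: keep_pairs.induct) auto

lemma keep_pairs_distinct: "distinct u \<Longrightarrow> distinct (keep_pairs P u)"
  by (induction P u rule: keep_pairs.induct) (use keep_pairs_subset in fastforce)+

lemma card_filter_distinct: "distinct xs \<Longrightarrow> card {x \<in> set xs. p x} = length (filter p xs)"
  by (metis distinct_card distinct_filter set_filter)

text \<open>The \<open>+\<close>-states are \<open>0..<k\<close> and the \<open>-\<close>-states are \<open>k..<k+l\<close>.\<close>
locale alternating = fixes k l :: nat
begin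

fun alt_seq :: "nat list \<Rightarrow> bool" where
  "alt_seq [a] = (a < k)"
| "alt_seq (a # b # c # rest) = (a < k \<and> k \<le> b \<and> b < k + l \<and> a < c \<and> alt_seq (c # rest)
      \<and> (case rest of [] \<Rightarrow> True | b' # _ \<Rightarrow> b' < b))"
| "alt_seq _ = False"

lemma alt_seq_set: "alt_seq w \<Longrightarrow> set w \<subseteq> {..<k+l}"
  by (induction w rule: alt_seq.induct) auto

lemma alt_seq_last: "alt_seq w \<Longrightarrow> last w < k"
  by (induction w rule: alt_seq.induct) auto

lemma alt_seq_hd: "alt_seq w \<Longrightarrow> hd w < k \<and> (\<forall>x\<in>set w. x < k \<longrightarrow> hd w \<le> x)"
proof (induction w rule: alt_seq.induct)
  case (2 a b c rest)
  then have "a < k" "a < c" "k \<le> b" "alt_seq (c # rest)" by auto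
  with 2 show ?case by fastforce
qed auto

lemma alt_seq_le_hd: "alt_seq (c # rest) \<Longrightarrow> x \<in> set (c # rest) \<Longrightarrow> x < k \<Longrightarrow> c \<le> x"
  using alt_seq_hd by fastforce

lemma alt_seq_snd: "alt_seq (a # b # t) \<Longrightarrow> k \<le> b"
  by (cases t) auto

lemma alt_seq_minus_bound:
  "alt_seq w \<Longrightarrow> (case tl w of [] \<Rightarrow> True | b' # _ \<Rightarrow> b' < B) \<Longrightarrow> \<forall>x\<in>set w. k \<le> x \<longrightarrow> x < B"
proof (induction w rule: alt_seq.induct)
  case (2 a b c rest)
  then show ?case by (cases rest) auto
qed auto

lemma alt_seq_tail_minus_less: "alt_seq (a # b # rest) \<Longrightarrow> \<forall>x\<in>set rest. k \<le> x \<longrightarrow> x < b"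
proof (cases rest)
  case (Cons c r)
  assume h: "alt_seq (a # b # rest)"
  then have "alt_seq (c # r)" "(case r of [] \<Rightarrow> True | b' # _ \<Rightarrow> b' < b)" using Cons by auto
  then show ?thesis using alt_seq_minus_bound[of "c # r" b] Cons by auto
qed simp

lemma alt_seq_replace_hd: "alt_seq (c # X) \<Longrightarrow> a < c \<Longrightarrow> alt_seq (a # X)"
proof (cases X)
  case (Cons b' t)
  assume "alt_seq (c # X)" "a < c"
  then show ?thesis using Cons by (cases t) auto
qed simp

lemma alt_seq_distinct: "alt_seq w \<Longrightarrow> distinct w"
proof (induction w rule: alt_seq.induct)
  case (2 a b c rest)
  from "2.prems" have cr: "alt_seq (c # rest)" and ac: "a < c" and ak: "a < k" and kb: "k \<le> b" by auto
  have "\<forall>x\<in>set (c # rest). x < k \<longrightarrow> c \<le> x" using alt_seq_hd[OF cr] by simp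
  moreover have "\<forall>x\<in>set (c # rest). k \<le> x \<longrightarrow> x < b"
    using alt_seq_tail_minus_less[OF "2.prems"] kb ac ak by auto
  ultimately have "a \<notin> set (c # rest)" "b \<notin> set (c # rest)" using ac ak kb by fastforce+
  then show ?case using "2.IH" cr ak kb by auto
qed auto

lemma alt_seq_eqI: "alt_seq w1 \<Longrightarrow> alt_seq w2 \<Longrightarrow> set w1 = set w2 \<Longrightarrow> w1 = w2"
proof (induction w1 arbitrary: w2 rule: alt_seq.induct)
  case (1 a)
  show ?case
  proof (cases w2 rule: alt_seq.cases)
    case (2 x y z r)
    then have "y \<in> {a}" "k \<le> y" using "1.prems" by auto
    then show ?thesis using "1.prems" by auto
  qed (use 1 in auto)
next
  case (2 a b c rest)
  have w1: "alt_seq (a # b # c # rest)" by fact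
  from w1 have ak: "a < k" and kb: "k \<le> b" and cr: "alt_seq (c # rest)" by auto
  show ?case
  proof (cases w2 rule: alt_seq.cases)
    case (2 x y z r)
    have w2: "alt_seq w2" by fact
    from w2 2 have xk: "x < k" and ky: "k \<le> y" and zr: "alt_seq (z # r)" by auto
    have st: "set (a # b # c # rest) = set (x # y # z # r)" using "2.prems" 2 by simp
    have ax: "a = x"
      using alt_seq_hd[OF w1] alt_seq_hd[OF w2] st xk ak 2 by (metis le_antisym list.sel(1) list.set_intros(1))
    have ck: "c < k" and zk: "z < k" using alt_seq_hd[OF cr] alt_seq_hd[OF zr] by auto
    have "y \<in> set rest \<Longrightarrow> b \<in> set r \<Longrightarrow> False"
      using alt_seq_tail_minus_less[OF w1] alt_seq_tail_minus_less[of x y "z # r"] w2 2 ky kb by fastforce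
    then have by': "b = y" using st ax xk ky ak kb ck zk by (metis insert_iff list.simps(15) not_le)
    have "set (c # rest) = set (z # r)"
    proof -
      have "set (c # rest) = set (a # b # c # rest) - {a, b}" using alt_seq_distinct[OF w1] by auto
      also have "\<dots> = set (x # y # z # r) - {x, y}" using st ax by' by simp
      also have "\<dots> = set (z # r)" using alt_seq_distinct[OF w2] 2 by auto
      finally show ?thesis .
    qed
    then show ?thesis using "2.IH"[OF cr zr] 2 ax by' by simp
  qed (use "2.prems" kb in auto)
qed auto

lemma alt_seq_card: "alt_seq w \<Longrightarrow> card (set w \<inter> {..<k}) = card (set w \<inter> {k..}) + 1"
proof (induction w rule: alt_seq.induct)
  case (1 a)
  then have "set [a] \<inter> {..<k} = {a}" "set [a] \<inter> {k..} = {}" by auto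
  then show ?case by simp
next
  case (2 a b c rest)
  have w: "alt_seq (a # b # c # rest)" by fact
  then have ak: "a < k" and kb: "k \<le> b" and cr: "alt_seq (c # rest)" by auto
  let ?S = "set (c # rest)"
  have "set (a # b # c # rest) \<inter> {..<k} = insert a (?S \<inter> {..<k})"
    and "set (a # b # c # rest) \<inter> {k..} = insert b (?S \<inter> {k..})" using ak kb by auto
  moreover have "a \<notin> ?S \<inter> {..<k}" "b \<notin> ?S \<inter> {k..}" using alt_seq_distinct[OF w] by auto
  ultimately show ?case using "2.IH"[OF cr] by simp
qed auto

lemma pair_lookup_plus:
  "alt_seq u \<Longrightarrow> pair_lookup u s = Some b \<Longrightarrow> s < k \<and> s \<in> set u \<and> s \<noteq> last u \<and> k \<le> b \<and> b \<in> set u"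
proof (induction u rule: alt_seq.induct)
  case (2 a b' c rest)
  have w: "alt_seq (a # b' # c # rest)" by fact
  then have cr: "alt_seq (c # rest)" and ak: "a < k" and kb: "k \<le> b'" by auto
  have d: "distinct (a # b' # c # rest)" using alt_seq_distinct[OF w] .
  show ?case
  proof (cases "s = a")
    case True
    then have "b = b'" using "2.prems" by simp
    moreover have "last (a # b' # c # rest) \<in> set (c # rest)" by simp
    ultimately show ?thesis using True ak kb d by auto
  next
    case False
    then have "pair_lookup (c # rest) s = Some b" using "2.prems" by simp
    then show ?thesis using "2.IH"[OF cr] by auto
  qed
qed auto

lemma pair_lookup_minus:
  "alt_seq u \<Longrightarrow> pair_lookup (tl u) s = Some a \<Longrightarrow> k \<le> s \<and> s \<in> set u \<and> a < k \<and> a \<in> set u"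
proof (induction u rule: alt_seq.induct)
  case (2 x b c rest)
  have w: "alt_seq (x # b # c # rest)" by fact
  then have cr: "alt_seq (c # rest)" and kb: "k \<le> b" by auto
  have ck: "c < k" using alt_seq_hd[OF cr] by simp
  show ?case
  proof (cases "s = b")
    case False
    then have "pair_lookup (tl (c # rest)) s = Some a" using "2.prems" by simp
    then show ?thesis using "2.IH"[OF cr] by auto
  qed (use "2.prems" kb ck in auto)
qed auto

lemma keep_pairs_set:
  "alt_seq u \<Longrightarrow> set (keep_pairs P u) = {a \<in> set u. a < k \<and> a \<in> P} \<union> {b. \<exists>a\<in>P. pair_lookup u a = Some b}"
proof (induction u rule: alt_seq.induct)
  case (2 a b c rest)
  have w: "alt_seq (a # b # c # rest)" by fact
  then have cr: "alt_seq (c # rest)" and ak: "a < k" and kb: "k \<le> b" by auto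
  have "pair_lookup (c # rest) a = None"
    using pair_lookup_set alt_seq_distinct[OF w] by (metis distinct.simps(2) list.set_intros(2) option.exhaust)
  then have "{b'. \<exists>a'\<in>P. pair_lookup (a # b # c # rest) a' = Some b'} =
        (if a \<in> P then {b} else {}) \<union> {b'. \<exists>a'\<in>P. pair_lookup (c # rest) a' = Some b'}"
    by (auto split: if_splits) (metis option.distinct(1))
  then show ?case using "2.IH"[OF cr] ak kb by auto
qed auto

lemma keep_pairs_tl_set:
  "alt_seq u \<Longrightarrow> set (hd u # keep_pairs Q (tl u))
     = {hd u} \<union> {b \<in> set u. k \<le> b \<and> b \<in> Q} \<union> {a. \<exists>b\<in>Q. pair_lookup (tl u) b = Some a}"
proof (induction u rule: alt_seq.induct)
  case (2 a b c rest)
  have w: "alt_seq (a # b # c # rest)" by fact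
  then have cr: "alt_seq (c # rest)" and ak: "a < k" and kb: "k \<le> b" by auto
  have d: "distinct (a # b # c # rest)" using alt_seq_distinct[OF w] .
  have ck: "c < k" using alt_seq_hd[OF cr] by simp
  let ?img = "{a'. \<exists>b'\<in>Q. pair_lookup rest b' = Some a'}"
  let ?T = "{b' \<in> set (c # rest). k \<le> b' \<and> b' \<in> Q} \<union> ?img"
  have IH: "set (c # keep_pairs Q rest) = {c} \<union> ?T"
    using "2.IH"[OF cr] by simp
  have "pair_lookup rest b = None"
    using pair_lookup_set d by (metis distinct.simps(2) list.set_intros(2) option.exhaust)
  then have img: "{a'. \<exists>b'\<in>Q. pair_lookup (b # c # rest) b' = Some a'} = (if b \<in> Q then {c} else {}) \<union> ?img"
    by (auto split: if_splits) (metis option.distinct(1))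
  have c_new: "c \<notin> set (keep_pairs Q rest)" "c \<notin> ?img"
    using keep_pairs_subset pair_lookup_set d by fastforce+
  then have "c \<notin> ?T" using ck by auto
  then have "set (keep_pairs Q rest) = ?T" using IH insert_ident[OF c_new(1)] by simp
  then show ?case using img ck ak kb by (cases "b \<in> Q") auto
qed auto

lemma keep_pairs_card:
  assumes u: "alt_seq u"
  shows "card (set (keep_pairs P u) \<inter> {..<k})
           = card (set (keep_pairs P u) \<inter> {k..}) + (if last u \<in> P then 1 else 0)"
proof -
  have count: "length (filter (\<lambda>x. x < k) (keep_pairs P u))
      = length (filter (\<lambda>x. \<not> x < k) (keep_pairs P u)) + (if last u \<in> P then 1 else 0)"
    using u by (induction u rule: alt_seq.induct) auto
  have d: "distinct (keep_pairs P u)" using keep_pairs_distinct alt_seq_distinct[OF u] by blast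
  have "set (keep_pairs P u) \<inter> {..<k} = {x \<in> set (keep_pairs P u). x < k}"
    and "set (keep_pairs P u) \<inter> {k..} = {x \<in> set (keep_pairs P u). \<not> x < k}" by auto
  then show ?thesis using count card_filter_distinct[OF d] by simp
qed

lemma keep_pairs_alt_seq:
  "alt_seq u \<Longrightarrow> last u \<in> P \<Longrightarrow> alt_seq (keep_pairs P u) \<and> u \<le> keep_pairs P u"
proof (induction u rule: alt_seq.induct)
  case (2 a b c rest)
  have w: "alt_seq (a # b # c # rest)" by fact
  then have cr: "alt_seq (c # rest)" and ak: "a < k" and kb: "k \<le> b" and bl: "b < k + l"
    and ac: "a < c" by auto
  define L where "L = keep_pairs P (c # rest)"
  have IH: "alt_seq L" "c # rest \<le> L" using "2.IH"[OF cr] "2.prems" L_def by auto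
  obtain h t where Lht: "L = h # t" using IH(1) by (cases L) auto
  have L_sub: "set L \<subseteq> set (c # rest)" using keep_pairs_subset L_def by blast
  have hk: "h < k" using alt_seq_hd[OF IH(1)] Lht by simp
  have ch: "c \<le> h" using alt_seq_le_hd[OF cr _ hk] L_sub Lht by simp
  show ?case
  proof (cases "a \<in> P")
    case True
    have "(case t of [] \<Rightarrow> True | b' # _ \<Rightarrow> b' < b)"
    proof (cases t)
      case (Cons b' t')
      have "k \<le> b'" using alt_seq_snd IH(1) Lht Cons by simp
      moreover have "b' \<in> set (c # rest)" using L_sub Lht Cons by auto
      ultimately have "b' \<in> set rest" using alt_seq_hd[OF cr] by auto
      then show ?thesis using alt_seq_tail_minus_less[OF w] \<open>k \<le> b'\<close> Cons by simp
    qed simp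
    then have "alt_seq (a # b # h # t)" using ak kb bl ac ch IH(1) Lht by simp
    moreover have "a # b # c # rest \<le> a # b # h # t" using IH(2) Lht by simp
    moreover have "keep_pairs P (a # b # c # rest) = a # b # h # t" using True L_def Lht by simp
    ultimately show ?thesis by simp
  next
    case False
    then have "keep_pairs P (a # b # c # rest) = h # t" using L_def Lht by simp
    moreover have "a < h" using ac ch by simp
    ultimately show ?thesis using IH(1) Lht by simp
  qed
qed auto

lemma keep_pairs_tl_alt_seq:
  "alt_seq u \<Longrightarrow> alt_seq (hd u # keep_pairs Q (tl u)) \<and> hd u # keep_pairs Q (tl u) \<le> u"
proof (induction u rule: alt_seq.induct)
  case (2 a b c rest)
  have w: "alt_seq (a # b # c # rest)" by fact
  then have cr: "alt_seq (c # rest)" and ak: "a < k" and kb: "k \<le> b" and bl: "b < k + l"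
    and ac: "a < c" by auto
  define X where "X = keep_pairs Q rest"
  have IH: "alt_seq (c # X)" "c # X \<le> c # rest" using "2.IH"[OF cr] X_def by auto
  have X_less: "(case X of [] \<Rightarrow> True | b' # _ \<Rightarrow> b' < b)"
  proof (cases X)
    case (Cons b' t')
    have "k \<le> b'" using alt_seq_snd IH(1) Cons by simp
    moreover have "b' \<in> set rest" using keep_pairs_subset[of Q rest] Cons X_def by auto
    ultimately show ?thesis using alt_seq_tail_minus_less[OF w] Cons by simp
  qed simp
  show ?case
  proof (cases "b \<in> Q")
    case True
    have "alt_seq (a # b # c # X)" using ak kb bl ac IH(1) X_less by simp
    then show ?thesis using True IH(2) X_def by simp
  next
    case False
    have "a # X \<le> a # b # c # rest" using X_less by (cases X) auto
    then show ?thesis using alt_seq_replace_hd[OF IH(1) ac] False X_def by simp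
  qed
qed auto

text \<open>The restriction is not lexicographically below \<open>u\<close>: the first deleted pair is replaced by a
  later, hence larger, \<open>+\<close>-state. The cardinality hypothesis forces the last state of \<open>u\<close> to stay.\<close>
lemma keep_pairs_restriction:
  assumes u: "alt_seq u" and P: "P \<subseteq> {a \<in> set u. a < k}"
    and card: "card P = card {b. \<exists>a\<in>P. pair_lookup u a = Some b} + 1"
  shows "alt_seq (keep_pairs P u) \<and> u \<le> keep_pairs P u
    \<and> set (keep_pairs P u) = P \<union> {b. \<exists>a\<in>P. pair_lookup u a = Some b} \<and> last u \<in> P"
proof -
  let ?img = "{b. \<exists>a\<in>P. pair_lookup u a = Some b}"
  have set_eq: "set (keep_pairs P u) = P \<union> ?img" using keep_pairs_set[OF u] P by auto
  have "?img \<subseteq> {k..}"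
  proof
    fix b assume "b \<in> ?img"
    then obtain a where "pair_lookup u a = Some b" by blast
    then show "b \<in> {k..}" using pair_lookup_plus[OF u] by simp
  qed
  moreover have "P \<subseteq> {..<k}" using P by auto
  ultimately have "set (keep_pairs P u) \<inter> {..<k} = P" "set (keep_pairs P u) \<inter> {k..} = ?img"
    using set_eq by auto
  then have "card P = card ?img + (if last u \<in> P then 1 else 0)"
    using keep_pairs_card[OF u, of P] by simp
  then have "last u \<in> P" using card by (cases "last u \<in> P") auto
  then show ?thesis using keep_pairs_alt_seq[OF u] set_eq by blast
qed

lemma alt_seq_exists:
  "finite B \<Longrightarrow> A \<subseteq> {..<k} \<Longrightarrow> B \<subseteq> {k..<k+l} \<Longrightarrow> card A = card B + 1
    \<Longrightarrow> \<exists>w. alt_seq w \<and> set w = A \<union> B"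
proof (induction "card B" arbitrary: A B)
  case 0
  then obtain a where "A = {a}" "B = {}" using card_1_singletonE by auto
  then show ?case using "0.prems" by (intro exI[of _ "[a]"]) auto
next
  case (Suc n)
  have fB: "finite B" by fact
  have fA: "finite A" using Suc.prems(4) Suc.hyps(2) card.infinite by fastforce
  have Bne: "B \<noteq> {}" and Ane: "A \<noteq> {}" using Suc.hyps(2) Suc.prems(4) by auto
  define a where "a = Min A"
  define b where "b = Max B"
  have aA: "a \<in> A" and bB: "b \<in> B" using Min_in[OF fA Ane] Max_in[OF fB Bne] a_def b_def by auto
  have ak: "a < k" and kb: "k \<le> b" "b < k + l" using aA bB Suc.prems(2,3) by auto
  have "n = card (B - {b})" "card (A - {a}) = card (B - {b}) + 1"
    using Suc.hyps(2) Suc.prems(4) aA bB fA fB by auto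
  moreover have "A - {a} \<subseteq> {..<k}" "B - {b} \<subseteq> {k..<k+l}" using Suc.prems(2,3) by auto
  ultimately obtain w where w: "alt_seq w" "set w = (A - {a}) \<union> (B - {b})"
    using Suc.hyps(1) fB by blast
  obtain c rest where cr: "w = c # rest" using w(1) by (cases w) auto
  have ck: "c < k" using alt_seq_hd[OF w(1)] cr by simp
  then have "c \<in> A - {a}" using w(2) cr Suc.prems(3) by auto
  then have ac: "a < c" using a_def fA by (simp add: order_le_neq_trans)
  have "(case rest of [] \<Rightarrow> True | b' # _ \<Rightarrow> b' < b)"
  proof (cases rest)
    case (Cons b' t)
    have "k \<le> b'" using alt_seq_snd w(1) cr Cons by simp
    moreover have "b' \<in> set w" using cr Cons by simp
    then have "b' \<in> (A - {a}) \<union> (B - {b})" using w(2) by blast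
    ultimately have "b' \<in> B - {b}" using Suc.prems(2) by auto
    then show ?thesis using Cons b_def fB by (simp add: order_le_neq_trans)
  qed simp
  then have "alt_seq (a # b # c # rest)" using ak kb ac w(1) cr by simp
  moreover have "set (a # b # c # rest) = A \<union> B" using w(2) cr aA bB by auto
  ultimately show ?case by blast
qed

definition alt_seq_code :: "nat list \<Rightarrow> nat set" where
  "alt_seq_code w = (set w \<inter> {..<k}) \<union> ({k..<k+l} - set w)"

lemma alt_seq_code_inj: "inj_on alt_seq_code {w. alt_seq w}"
proof (rule inj_onI)
  have decode: "set w = (alt_seq_code w \<inter> {..<k}) \<union> ({k..<k+l} - alt_seq_code w)" if "alt_seq w" for w
    using alt_seq_set[OF that] unfolding alt_seq_code_def by auto
  fix w1 w2 assume "w1 \<in> {w. alt_seq w}" "w2 \<in> {w. alt_seq w}" "alt_seq_code w1 = alt_seq_code w2"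
  then show "w1 = w2" using alt_seq_eqI decode by simp
qed

lemma alt_seq_code_image: "alt_seq_code ` {w. alt_seq w} = {S. S \<subseteq> {..<k+l} \<and> card S = l + 1}"
proof
  show "alt_seq_code ` {w. alt_seq w} \<subseteq> {S. S \<subseteq> {..<k+l} \<and> card S = l + 1}"
  proof
    fix S assume "S \<in> alt_seq_code ` {w. alt_seq w}"
    then obtain w where w: "alt_seq w" "S = alt_seq_code w" by auto
    have "set w \<inter> {k..} = set w \<inter> {k..<k+l}" using alt_seq_set[OF w(1)] by auto
    moreover have "card ({k..<k+l} - set w) = l - card (set w \<inter> {k..<k+l})"
      using card_Diff_subset_Int[of "{k..<k+l}" "set w"] by (simp add: Int_commute)
    moreover have "card (set w \<inter> {k..<k+l}) \<le> l"
      using card_mono[of "{k..<k+l}" "set w \<inter> {k..<k+l}"] by simp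
    moreover have "card S = card (set w \<inter> {..<k}) + card ({k..<k+l} - set w)"
      unfolding w(2) alt_seq_code_def by (rule card_Un_disjoint) auto
    ultimately have "card S = l + 1" using alt_seq_card[OF w(1)] by simp
    moreover have "S \<subseteq> {..<k+l}" using w unfolding alt_seq_code_def by auto
    ultimately show "S \<in> {S. S \<subseteq> {..<k+l} \<and> card S = l + 1}" by simp
  qed
next
  show "{S. S \<subseteq> {..<k+l} \<and> card S = l + 1} \<subseteq> alt_seq_code ` {w. alt_seq w}"
  proof
    fix S assume "S \<in> {S. S \<subseteq> {..<k+l} \<and> card S = l + 1}"
    then have S: "S \<subseteq> {..<k+l}" "card S = l + 1" by auto
    define A where "A = S \<inter> {..<k}"
    define B where "B = {k..<k+l} - S"
    have "S = A \<union> (S \<inter> {k..<k+l})" using S A_def by auto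
    moreover have "card (A \<union> (S \<inter> {k..<k+l})) = card A + card (S \<inter> {k..<k+l})"
      by (rule card_Un_disjoint) (use S finite_subset[of S "{..<k+l}"] A_def in auto)
    ultimately have "card S = card A + card (S \<inter> {k..<k+l})" by simp
    moreover have "card B = l - card (S \<inter> {k..<k+l})"
      unfolding B_def using card_Diff_subset_Int[of "{k..<k+l}" S] by (simp add: Int_commute)
    moreover have "card (S \<inter> {k..<k+l}) \<le> l"
      using card_mono[of "{k..<k+l}" "S \<inter> {k..<k+l}"] by simp
    ultimately have "card A = card B + 1" using S(2) by linarith
    then obtain w where w: "alt_seq w" "set w = A \<union> B"
      using alt_seq_exists[of B A] A_def B_def by auto
    have "alt_seq_code w = S" unfolding alt_seq_code_def w(2) A_def B_def using S by auto
    then show "S \<in> alt_seq_code ` {w. alt_seq w}" using w(1) by blast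
  qed
qed

lemma card_alt_seqs: "card {w. alt_seq w} = (k + l) choose (l + 1)"
  using card_image[OF alt_seq_code_inj] alt_seq_code_image n_subsets[of "{..<k+l}" "l + 1"] by simp

lemma finite_alt_seqs: "finite {w. alt_seq w}"
proof (rule inj_on_finite[OF alt_seq_code_inj])
  show "alt_seq_code ` {w. alt_seq w} \<subseteq> Pow {..<k+l}" unfolding alt_seq_code_def by auto
qed simp

end

locale witness = alternating + assumes two_le_k: "2 \<le> k"
begin

definition seqs :: "nat list list" where
  "seqs = sorted_list_of_set {w. alt_seq w}"

definition n_letters :: nat where
  "n_letters = length seqs - 1"

text \<open>The intended crossing sequences on the left and right boundary of a letter are \<open>u\<close> and \<open>u'\<close>:
  a \<open>+\<close>-state of \<open>u\<close> turns back as its partner, except that the last one proceeds to \<open>u'\<close>;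
  a \<open>-\<close>-state of \<open>u'\<close> proceeds as its partner in \<open>u'\<close>.\<close>
definition cross_move :: "nat list \<Rightarrow> nat list \<Rightarrow> nat \<Rightarrow> (nat \<times> int) option" where
  "cross_move u u' s =
     (if s < k then (if s = last u then Some (hd u', 1) else map_option (\<lambda>b. (b, -1)) (pair_lookup u s))
      else if s < k + l then map_option (\<lambda>a. (a, 1)) (pair_lookup (tl u') s) else None)"

definition witness_trans :: "nat \<Rightarrow> nat tsym \<Rightarrow> (nat \<times> int) option" where
  "witness_trans s c = (case c of
      LEnd \<Rightarrow> if s = 0 then Some (0, 1) else None
    | REnd \<Rightarrow> None
    | Sym i \<Rightarrow> if i < n_letters then cross_move (seqs ! i) (seqs ! (i + 1)) s else None)"

definition witness_tdfa :: tdfa where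
  "witness_tdfa = \<lparr>alph = {0..<n_letters}, states = {0..<k+l}, init = 0, trans = witness_trans,
     final = {k - 1}\<rparr>"

lemma set_seqs: "set seqs = {w. alt_seq w}"
  using finite_alt_seqs seqs_def by simp

lemma sorted_seqs: "sorted_wrt (<) seqs"
  using seqs_def strict_sorted_list_of_set by simp

lemma length_seqs: "length seqs = (k + l) choose (l + 1)"
  using seqs_def card_alt_seqs finite_alt_seqs by simp

lemma alt_seq_seqs: "i < length seqs \<Longrightarrow> alt_seq (seqs ! i)"
  using set_seqs nth_mem by fastforce

lemma seqs_index: "alt_seq w \<Longrightarrow> \<exists>i<length seqs. seqs ! i = w"
  using set_seqs by (metis in_set_conv_nth mem_Collect_eq)

lemma seqs_index_mono: "i < length seqs \<Longrightarrow> j < length seqs \<Longrightarrow> seqs ! i \<le> seqs ! j \<Longrightarrow> i \<le> j"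
  using sorted_wrt_nth_less[OF sorted_seqs, of j i] by (metis leD not_le_imp_less)

lemma alt_seq_singletons: "alt_seq [0]" "alt_seq [k - 1]"
  using two_le_k by auto

lemma first_le_alt_seq: "alt_seq w \<Longrightarrow> [0] \<le> w"
  by (cases w) (auto simp: neq0_conv)

lemma alt_seq_le_last: "alt_seq w \<Longrightarrow> w \<le> [k - 1]"
proof (cases w rule: alt_seq.cases)
  case (2 a b c rest)
  assume "alt_seq w"
  then have "a < c" "c < k" using 2 alt_seq_hd[of "c # rest"] by auto
  then show ?thesis using 2 by simp
qed (auto simp: le_less)

lemma length_seqs_n_letters: "length seqs = n_letters + 1" "1 \<le> n_letters"
proof -
  obtain i j where "i < length seqs" "seqs ! i = [0]" "j < length seqs" "seqs ! j = [k - 1]"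
    using seqs_index alt_seq_singletons by metis
  moreover have "i \<noteq> j" using calculation two_le_k by auto
  ultimately show "length seqs = n_letters + 1" "1 \<le> n_letters" using n_letters_def by auto
qed

lemma seqs_first: "seqs ! 0 = [0]"
proof -
  obtain i where i: "i < length seqs" "seqs ! i = [0]" using seqs_index alt_seq_singletons by blast
  then have "i \<le> 0"
    using first_le_alt_seq[OF alt_seq_seqs[of 0]] seqs_index_mono[of i 0] length_seqs_n_letters by simp
  then show ?thesis using i by simp
qed

lemma seqs_last: "seqs ! n_letters = [k - 1]"
proof -
  obtain i where i: "i < length seqs" "seqs ! i = [k - 1]" using seqs_index alt_seq_singletons by blast
  then have "n_letters \<le> i"
    using alt_seq_le_last[OF alt_seq_seqs[of n_letters]] seqs_index_mono[of n_letters i]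
      length_seqs_n_letters by simp
  then have "i = n_letters" using i length_seqs_n_letters by simp
  then show ?thesis using i by simp
qed

lemma alt_seq_letter: "c < n_letters \<Longrightarrow> alt_seq (seqs ! c) \<and> alt_seq (seqs ! (c + 1))"
  using alt_seq_seqs length_seqs_n_letters by simp

lemma cross_move_dir:
  "alt_seq u \<Longrightarrow> alt_seq u' \<Longrightarrow> cross_move u u' s = Some (r, d) \<Longrightarrow>
     s < k + l \<and> r < k + l \<and> (d = 1 \<and> r < k \<or> d = -1 \<and> k \<le> r)"
  unfolding cross_move_def
  using pair_lookup_plus[of u s r] pair_lookup_minus[of u' s r] alt_seq_set[of u] alt_seq_set[of u']
    alt_seq_hd[of u'] two_le_k
  by (auto split: if_splits)

lemma witness_trans_dir:
  "witness_trans q c = Some (r, d) \<Longrightarrow> q < k + l \<and> r < k + l \<and> (d = 1 \<and> r < k \<or> d = -1 \<and> k \<le> r)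
     \<and> (c = LEnd \<or> (\<exists>i<n_letters. c = Sym i))"
proof (cases c)
  case (Sym i)
  assume "witness_trans q c = Some (r, d)"
  then have i: "i < n_letters" and "cross_move (seqs ! i) (seqs ! (i + 1)) q = Some (r, d)"
    using Sym unfolding witness_trans_def by (auto split: if_splits)
  then show ?thesis using cross_move_dir alt_seq_letter[OF i] Sym by blast
qed (use two_le_k in \<open>auto simp: witness_trans_def split: if_splits\<close>)

lemma wf_witness_tdfa: "wf_tdfa witness_tdfa"
  unfolding wf_tdfa_def witness_tdfa_def tape_syms_def using two_le_k witness_trans_dir by fastforce

lemma direction_determinate_witness_tdfa:
  "direction_determinate_wrt witness_tdfa {0..<k} {k..<k+l}"
  unfolding direction_determinate_wrt_def witness_tdfa_def using witness_trans_dir by fastforce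

end

lemma stepI:
  "i \<le> Suc (length w) \<Longrightarrow> trans A q (tape w i) = Some (r, d) \<Longrightarrow> 0 \<le> int i + d \<Longrightarrow>
   int i + d \<le> int (Suc (length w)) \<Longrightarrow> j = nat (int i + d) \<Longrightarrow> step A w (q, i) (r, j)"
  unfolding step_def by blast

context witness
begin

abbreviation witness_word :: "nat list" where
  "witness_word \<equiv> [0..<n_letters]"

lemma tape_witness_word: "1 \<le> x \<Longrightarrow> x \<le> n_letters \<Longrightarrow> tape witness_word x = Sym (x - 1)"
  unfolding tape_def by auto

text \<open>Entering cell \<open>i + 1\<close> in the first state of a suffix of the pairs of \<open>seqs ! i\<close>, the run
  bounces between cells \<open>i\<close> and \<open>i + 1\<close> through these pairs and ends in the last state.\<close>
lemma witness_word_bounce: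
  assumes i: "i < n_letters" and z: "alt_seq z"
    and z_plus: "\<forall>a b. pair_lookup z a = Some b \<longrightarrow> pair_lookup (seqs ! i) a = Some b"
    and z_minus: "\<forall>a b. pair_lookup (tl z) a = Some b \<longrightarrow> pair_lookup (tl (seqs ! i)) a = Some b"
    and z_last: "last z = last (seqs ! i)"
  shows "(step witness_tdfa witness_word)\<^sup>*\<^sup>* (hd z, i + 1) (last (seqs ! i), i + 1)"
  using z z_plus z_minus z_last
proof (induction z rule: alt_seq.induct)
  case (2 a b c rest)
  let ?z = "a # b # c # rest"
  let ?u = "seqs ! i"
  have zc: "alt_seq ?z" by fact
  then have cr: "alt_seq (c # rest)" and ak: "a < k" and kb: "k \<le> b" and bl: "b < k + l" by auto
  have d: "distinct ?z" using alt_seq_distinct[OF zc] .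
  have pa: "pair_lookup ?u a = Some b" using "2.prems"(2) by simp
  have pb: "pair_lookup (tl ?u) b = Some c" using "2.prems"(3) by simp
  have "last ?u = last (c # rest)" using "2.prems"(4) by simp
  then have "last ?u \<in> set (c # rest)" by (metis last_in_set list.discI)
  then have a_not_last: "a \<noteq> last ?u" using d by auto
  have "1 \<le> i"
    using pa seqs_first by (cases i) auto
  have s1: "step witness_tdfa witness_word (a, i + 1) (b, i)"
    by (rule stepI[where d = "-1"])
      (use tape_witness_word[of "i + 1"] i ak a_not_last pa in
        \<open>auto simp: witness_tdfa_def witness_trans_def cross_move_def\<close>)
  have s2: "step witness_tdfa witness_word (b, i) (c, i + 1)"
  proof (rule stepI[where d = 1])
    have "i - 1 + 1 = i" "i - 1 < n_letters" using \<open>1 \<le> i\<close> i by auto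
    then show "trans witness_tdfa b (tape witness_word i) = Some (c, 1)"
      using tape_witness_word[of i] \<open>1 \<le> i\<close> i kb bl pb
      unfolding witness_tdfa_def witness_trans_def cross_move_def by simp
  qed (use i \<open>1 \<le> i\<close> in auto)
  have "(step witness_tdfa witness_word)\<^sup>*\<^sup>* (hd (c # rest), i + 1) (last ?u, i + 1)"
  proof (rule "2.IH"[OF cr])
    show "\<forall>x y. pair_lookup (c # rest) x = Some y \<longrightarrow> pair_lookup ?u x = Some y"
    proof (intro allI impI)
      fix x y assume h: "pair_lookup (c # rest) x = Some y"
      then have "x \<noteq> a" using pair_lookup_set d by fastforce
      then show "pair_lookup ?u x = Some y" using h "2.prems"(2) by simp
    qed
    show "\<forall>x y. pair_lookup (tl (c # rest)) x = Some y \<longrightarrow> pair_lookup (tl ?u) x = Some y"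
    proof (intro allI impI)
      fix x y assume h: "pair_lookup (tl (c # rest)) x = Some y"
      then have "x \<noteq> b" using pair_lookup_set d by fastforce
      then show "pair_lookup (tl ?u) x = Some y" using h "2.prems"(3) by simp
    qed
    show "last (c # rest) = last ?u" using "2.prems"(4) by simp
  qed
  then show ?case using s1 s2 by (simp add: converse_rtranclp_into_rtranclp)
qed auto

lemma witness_word_reaches:
  "i \<le> n_letters \<Longrightarrow> (step witness_tdfa witness_word)\<^sup>*\<^sup>* (0, 0) (hd (seqs ! i), i + 1)"
proof (induction i)
  case 0
  have "step witness_tdfa witness_word (0, 0) (0, 1)"
    by (rule stepI[where d = 1]) (auto simp: witness_tdfa_def witness_trans_def tape_def)
  then show ?case using seqs_first by simp
next
  case (Suc i)
  then have i: "i < n_letters" by simp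
  have u: "alt_seq (seqs ! i)" using alt_seq_letter[OF i] by simp
  have "(step witness_tdfa witness_word)\<^sup>*\<^sup>* (hd (seqs ! i), i + 1) (last (seqs ! i), i + 1)"
    by (rule witness_word_bounce[OF i u]) auto
  moreover have "step witness_tdfa witness_word (last (seqs ! i), i + 1) (hd (seqs ! (i + 1)), i + 2)"
    by (rule stepI[where d = 1])
      (use tape_witness_word[of "i + 1"] i alt_seq_last[OF u] in
        \<open>auto simp: witness_tdfa_def witness_trans_def cross_move_def\<close>)
  ultimately show ?case using Suc.IH i by (simp add: rtranclp.rtrancl_into_rtrancl)
qed

lemma accepts_witness_word: "accepts witness_tdfa witness_word"
  using witness_word_reaches[of n_letters] seqs_last
  unfolding accepts_def by (auto simp: witness_tdfa_def)

end

locale accepting_run = witness + fixes v :: "nat list"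
  assumes accepted: "accepts witness_tdfa v"
begin

abbreviation run_step :: "nat \<times> nat \<Rightarrow> nat \<times> nat \<Rightarrow> bool" where
  "run_step \<equiv> step witness_tdfa v"

definition run_confs :: "(nat \<times> nat) set" where
  "run_confs = {c. run_step\<^sup>*\<^sup>* (0, 0) c \<and> run_step\<^sup>*\<^sup>* c (k - 1, Suc (length v))}"

definition left_seq :: "nat \<Rightarrow> nat list" where
  "left_seq b = seqs ! (v ! b)"

definition right_seq :: "nat \<Rightarrow> nat list" where
  "right_seq b = seqs ! (v ! b + 1)"

text \<open>Cell \<open>b + 1\<close> holds letter \<open>v ! b\<close>; a state crosses the boundary between cells \<open>b\<close> and \<open>b + 1\<close>
  rightwards by arriving in cell \<open>b + 1\<close> (necessarily in a \<open>+\<close>-state), leftwards by arriving in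
  cell \<open>b\<close> in a \<open>-\<close>-state.\<close>
definition crossing_plus :: "nat \<Rightarrow> nat set" where
  "crossing_plus b = {s. s < k \<and> (s, Suc b) \<in> run_confs}"

definition crossing_minus :: "nat \<Rightarrow> nat set" where
  "crossing_minus b = {s. k \<le> s \<and> (s, b) \<in> run_confs}"

definition crossing :: "nat \<Rightarrow> nat set" where
  "crossing b = crossing_plus b \<union> crossing_minus b"

lemma letters_of_accepted: "b < length v \<Longrightarrow> v ! b < n_letters"
  using accepted by (auto simp: accepts_def witness_tdfa_def)

lemma alt_seq_left_right: "b < length v \<Longrightarrow> alt_seq (left_seq b) \<and> alt_seq (right_seq b)"
  using alt_seq_letter[OF letters_of_accepted] left_seq_def right_seq_def by simp

lemma step_cases:
  assumes "run_step (s, y) (r, y')"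
  shows "(y = 0 \<and> s = 0 \<and> r = 0 \<and> y' = 1) \<or>
    (\<exists>b < length v. y = Suc b \<and> (\<exists>d. cross_move (left_seq b) (right_seq b) s = Some (r, d)
       \<and> (d = 1 \<and> y' = Suc y \<and> r < k \<or> d = -1 \<and> y' = b \<and> k \<le> r)))"
proof -
  from assms obtain d where t: "witness_trans s (tape v y) = Some (r, d)" and yb: "y \<le> Suc (length v)"
    and y': "0 \<le> int y + d" "y' = nat (int y + d)"
    unfolding step_def witness_tdfa_def by auto
  show ?thesis
  proof (cases y)
    case 0
    then show ?thesis using t y' by (auto simp: witness_trans_def tape_def split: if_splits)
  next
    case (Suc b)
    then have b: "b < length v" using t yb by (cases "b = length v") (auto simp: witness_trans_def tape_def)
    then have "cross_move (left_seq b) (right_seq b) s = Some (r, d)"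
      using t Suc letters_of_accepted[OF b]
      by (simp add: witness_trans_def tape_def left_seq_def right_seq_def)
    moreover from this have "d = 1 \<and> r < k \<or> d = -1 \<and> k \<le> r"
      using cross_move_dir alt_seq_left_right[OF b] by blast
    ultimately show ?thesis using Suc b y' by auto
  qed
qed

lemma run_confs_init: "(0, 0) \<in> run_confs" and run_confs_final: "(k - 1, Suc (length v)) \<in> run_confs"
  using accepted unfolding run_confs_def accepts_def by (auto simp: witness_tdfa_def)

lemma run_confs_succ:
  assumes "c \<in> run_confs" "c \<noteq> (k - 1, Suc (length v))"
  shows "\<exists>c'. run_step c c' \<and> c' \<in> run_confs"
proof -
  obtain c' where "run_step c c'" "run_step\<^sup>*\<^sup>* c' (k - 1, Suc (length v))"
    using assms converse_rtranclpE unfolding run_confs_def by (metis mem_Collect_eq)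
  moreover have "run_step\<^sup>*\<^sup>* (0, 0) c'" using assms calculation(1) unfolding run_confs_def by auto
  ultimately show ?thesis unfolding run_confs_def by blast
qed

lemma run_confs_pred:
  assumes "c \<in> run_confs" "c \<noteq> (0, 0)"
  shows "\<exists>c0\<in>run_confs. run_step c0 c"
proof -
  obtain c0 where "run_step\<^sup>*\<^sup>* (0, 0) c0" "run_step c0 c"
    using assms rtranclp.cases unfolding run_confs_def by (metis mem_Collect_eq)
  moreover have "run_step\<^sup>*\<^sup>* c0 (k - 1, Suc (length v))"
    using assms calculation(2) unfolding run_confs_def by (auto intro: converse_rtranclp_into_rtranclp)
  ultimately show ?thesis unfolding run_confs_def by blast
qed

lemma run_confs_move:
  assumes "(s, Suc b) \<in> run_confs" "b < length v"
  shows "\<exists>r. (cross_move (left_seq b) (right_seq b) s = Some (r, 1) \<and> r < k \<and> (r, Suc (Suc b)) \<in> run_confs)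
    \<or> (cross_move (left_seq b) (right_seq b) s = Some (r, -1) \<and> k \<le> r \<and> (r, b) \<in> run_confs)"
proof -
  have "(s, Suc b) \<noteq> (k - 1, Suc (length v))" using assms(2) by simp
  then obtain c' where "run_step (s, Suc b) c'" "c' \<in> run_confs" using run_confs_succ[OF assms(1)] by blast
  moreover obtain r y where "c' = (r, y)" by (cases c')
  ultimately show ?thesis using step_cases[of s "Suc b" r y] by auto
qed

lemma crossing_plus_subset:
  assumes b: "b < length v"
  shows "crossing_plus b \<subseteq> {a \<in> set (left_seq b). a < k}"
proof
  fix s assume "s \<in> crossing_plus b"
  then have sV: "(s, Suc b) \<in> run_confs" and sk: "s < k" unfolding crossing_plus_def by auto
  obtain r d where t: "cross_move (left_seq b) (right_seq b) s = Some (r, d)"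
    using run_confs_move[OF sV b] by auto
  have "s \<in> set (left_seq b)"
  proof (cases "s = last (left_seq b)")
    case True then show ?thesis using alt_seq_left_right[OF b] by (cases "left_seq b") auto
  next
    case False
    then obtain x where "pair_lookup (left_seq b) s = Some x"
      using t sk unfolding cross_move_def by (auto split: if_splits)
    then show ?thesis using pair_lookup_set by blast
  qed
  then show "s \<in> {a \<in> set (left_seq b). a < k}" using sk by simp
qed

lemma crossing_minus_eq:
  assumes b: "b < length v"
  shows "crossing_minus b = {x. \<exists>a\<in>crossing_plus b. pair_lookup (left_seq b) a = Some x}"
proof
  show "{x. \<exists>a\<in>crossing_plus b. pair_lookup (left_seq b) a = Some x} \<subseteq> crossing_minus b"
  proof
    fix x assume "x \<in> {x. \<exists>a\<in>crossing_plus b. pair_lookup (left_seq b) a = Some x}"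
    then obtain a where a: "a \<in> crossing_plus b" "pair_lookup (left_seq b) a = Some x" by auto
    have aV: "(a, Suc b) \<in> run_confs" using a(1) unfolding crossing_plus_def by simp
    have "a \<noteq> last (left_seq b)" "a < k" using pair_lookup_plus alt_seq_left_right[OF b] a(2) by auto
    then have "cross_move (left_seq b) (right_seq b) a = Some (x, -1)"
      using a(2) unfolding cross_move_def by simp
    then show "x \<in> crossing_minus b" using run_confs_move[OF aV b] unfolding crossing_minus_def by auto
  qed
  show "crossing_minus b \<subseteq> {x. \<exists>a\<in>crossing_plus b. pair_lookup (left_seq b) a = Some x}"
  proof
    fix x assume "x \<in> crossing_minus b"
    then have xV: "(x, b) \<in> run_confs" and kx: "k \<le> x" unfolding crossing_minus_def by auto
    then have "(x, b) \<noteq> (0, 0)" using two_le_k by auto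
    then obtain s y where sV: "(s, y) \<in> run_confs" and st: "run_step (s, y) (x, b)"
      using run_confs_pred[OF xV] by auto
    then have "y = Suc b \<and> cross_move (left_seq b) (right_seq b) s = Some (x, -1)"
      using step_cases[OF st] kx two_le_k by auto
    then have "s \<in> crossing_plus b" "pair_lookup (left_seq b) s = Some x"
      using sV unfolding crossing_plus_def cross_move_def by (auto split: if_splits)
    then show "x \<in> {x. \<exists>a\<in>crossing_plus b. pair_lookup (left_seq b) a = Some x}" by auto
  qed
qed

lemma crossing_minus_Suc_subset:
  assumes b: "b < length v"
  shows "crossing_minus (Suc b) \<subseteq> {x \<in> set (right_seq b). k \<le> x}"
proof
  fix s assume "s \<in> crossing_minus (Suc b)"
  then have sV: "(s, Suc b) \<in> run_confs" and sk: "k \<le> s" unfolding crossing_minus_def by auto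
  obtain r d where "cross_move (left_seq b) (right_seq b) s = Some (r, d)"
    using run_confs_move[OF sV b] by auto
  then obtain a where "pair_lookup (tl (right_seq b)) s = Some a"
    using sk unfolding cross_move_def by (auto split: if_splits)
  then show "s \<in> {x \<in> set (right_seq b). k \<le> x}" using pair_lookup_minus alt_seq_left_right[OF b] by blast
qed

lemma crossing_plus_Suc_subset:
  assumes b: "b < length v"
  shows "crossing_plus (Suc b)
    \<subseteq> insert (hd (right_seq b)) {a. \<exists>x\<in>crossing_minus (Suc b). pair_lookup (tl (right_seq b)) x = Some a}"
    (is "_ \<subseteq> insert _ ?img")
proof
  fix r assume "r \<in> crossing_plus (Suc b)"
  then have rV: "(r, Suc (Suc b)) \<in> run_confs" and rk: "r < k" unfolding crossing_plus_def by auto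
  obtain s y where sV: "(s, y) \<in> run_confs" and st: "run_step (s, y) (r, Suc (Suc b))"
    using run_confs_pred[OF rV] by auto
  then have y: "y = Suc b" and t: "cross_move (left_seq b) (right_seq b) s = Some (r, 1)"
    using step_cases[OF st] rk by auto
  show "r \<in> insert (hd (right_seq b)) ?img"
  proof (cases "s < k")
    case True
    then show ?thesis using t unfolding cross_move_def by (auto split: if_splits)
  next
    case False
    then have "pair_lookup (tl (right_seq b)) s = Some r" "s \<in> crossing_minus (Suc b)"
      using t sV y unfolding cross_move_def crossing_minus_def by (auto split: if_splits)
    then show ?thesis by auto
  qed
qed

lemma crossing_plus_Suc_eq:
  assumes b: "b < length v" and last_in: "last (left_seq b) \<in> crossing_plus b"
  shows "crossing_plus (Suc b)
    = insert (hd (right_seq b)) {a. \<exists>x\<in>crossing_minus (Suc b). pair_lookup (tl (right_seq b)) x = Some a}"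
    (is "_ = insert _ ?img")
proof (rule antisym[OF crossing_plus_Suc_subset[OF b] subsetI])
  fix a assume "a \<in> insert (hd (right_seq b)) ?img"
  then consider "a = hd (right_seq b)" | x where "x \<in> crossing_minus (Suc b)"
    "pair_lookup (tl (right_seq b)) x = Some a" by auto
  then show "a \<in> crossing_plus (Suc b)"
  proof cases
    case 1
    have "(last (left_seq b), Suc b) \<in> run_confs" "last (left_seq b) < k"
      using last_in unfolding crossing_plus_def by auto
    moreover from this have "cross_move (left_seq b) (right_seq b) (last (left_seq b)) = Some (a, 1)"
      using 1 unfolding cross_move_def by simp
    ultimately show ?thesis using run_confs_move[OF _ b] unfolding crossing_plus_def by fastforce
  next
    case 2
    have xV: "(x, Suc b) \<in> run_confs" and kx: "k \<le> x"
      using 2(1) unfolding crossing_minus_def by auto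
    have "x < k + l" using pair_lookup_minus[OF _ 2(2)] alt_seq_set alt_seq_left_right[OF b] by blast
    then have "cross_move (left_seq b) (right_seq b) x = Some (a, 1)"
      using kx 2(2) unfolding cross_move_def by simp
    then show ?thesis using run_confs_move[OF xV b] unfolding crossing_plus_def by auto
  qed
qed

lemma crossing_step:
  assumes b: "b < length v" and i: "i < length seqs" "crossing b = set (seqs ! i)"
  shows "\<exists>j \<le> Suc i. j < length seqs \<and> crossing (Suc b) = set (seqs ! j)"
proof -
  have u: "alt_seq (left_seq b)" and u': "alt_seq (right_seq b)" using alt_seq_left_right[OF b] by auto
  have c: "v ! b + 1 < length seqs" using letters_of_accepted[OF b] length_seqs_n_letters by simp
  have "crossing_plus b = crossing b \<inter> {..<k}" "crossing_minus b = crossing b \<inter> {k..}"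
    unfolding crossing_def crossing_plus_def crossing_minus_def by auto
  then have "card (crossing_plus b) = card (crossing_minus b) + 1"
    using alt_seq_card[OF alt_seq_seqs[OF i(1)]] i(2) by simp
  then obtain L where L: "alt_seq L" "left_seq b \<le> L" "set L = crossing b"
    and last_in: "last (left_seq b) \<in> crossing_plus b"
    using keep_pairs_restriction[OF u crossing_plus_subset[OF b]] crossing_minus_eq[OF b]
    unfolding crossing_def by auto
  then have "L = seqs ! i" using alt_seq_eqI alt_seq_seqs[OF i(1)] i(2) by simp
  then have vb: "v ! b \<le> i" using L(2) seqs_index_mono[of "v ! b" i] c i(1) left_seq_def by simp
  define R where "R = hd (right_seq b) # keep_pairs (crossing_minus (Suc b)) (tl (right_seq b))"
  have "set R = crossing (Suc b)"
    using keep_pairs_tl_set[OF u'] crossing_minus_Suc_subset[OF b] crossing_plus_Suc_eq[OF b last_in]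
    unfolding R_def crossing_def by auto
  moreover obtain j where "j < length seqs" "seqs ! j = R"
    using seqs_index keep_pairs_tl_alt_seq[OF u'] R_def by blast
  moreover from this have "j \<le> v ! b + 1"
    using keep_pairs_tl_alt_seq[OF u'] seqs_index_mono[of j "v ! b + 1"] c R_def right_seq_def by simp
  ultimately show ?thesis using vb by (intro exI[of _ j]) auto
qed

lemma crossing_0: "crossing 0 = set (seqs ! 0)"
proof -
  have "crossing_minus 0 = {}"
  proof -
    have False if xV: "(x, 0) \<in> run_confs" and kx: "k \<le> x" for x
    proof -
      obtain c' where "run_step (x, 0) c'" using run_confs_succ[OF xV] by auto
      then show False using step_cases[of x 0 "fst c'" "snd c'"] kx two_le_k by simp
    qed
    then show ?thesis unfolding crossing_minus_def by auto
  qed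
  moreover have "crossing_plus 0 = {0}"
  proof
    obtain c' where "run_step (0, 0) c'" "c' \<in> run_confs" using run_confs_succ[OF run_confs_init] by auto
    then have "(0, 1) \<in> run_confs" using step_cases[of 0 0 "fst c'" "snd c'"] by (cases c') auto
    then show "{0} \<subseteq> crossing_plus 0" using two_le_k unfolding crossing_plus_def by auto
    show "crossing_plus 0 \<subseteq> {0}"
    proof
      fix r assume "r \<in> crossing_plus 0"
      then have rV: "(r, 1) \<in> run_confs" and rk: "r < k" unfolding crossing_plus_def by auto
      obtain c0 where "run_step c0 (r, 1)" using run_confs_pred[OF rV] by auto
      then show "r \<in> {0}" using step_cases[of "fst c0" "snd c0" r 1] rk by auto
    qed
  qed
  ultimately show ?thesis using seqs_first unfolding crossing_def by simp
qed

lemma crossing_invariant: "b \<le> length v \<Longrightarrow> \<exists>i \<le> b. i < length seqs \<and> crossing b = set (seqs ! i)"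
proof (induction b)
  case 0
  then show ?case using crossing_0 length_seqs_n_letters by auto
next
  case (Suc b)
  then have b: "b < length v" by simp
  then obtain i where i: "i \<le> b" "i < length seqs" "crossing b = set (seqs ! i)"
    using Suc.IH by auto
  then obtain j where "j \<le> Suc i" "j < length seqs" "crossing (Suc b) = set (seqs ! j)"
    using crossing_step[OF b i(2,3)] by blast
  then show ?case using i(1) by (intro exI[of _ j]) auto
qed

lemma crossing_end: "crossing (length v) = {k - 1}"
proof -
  have "crossing_plus (length v) = {k - 1}"
  proof
    show "{k - 1} \<subseteq> crossing_plus (length v)"
      using run_confs_final two_le_k unfolding crossing_plus_def by auto
    show "crossing_plus (length v) \<subseteq> {k - 1}"
    proof
      fix r assume "r \<in> crossing_plus (length v)"
      then have rV: "(r, Suc (length v)) \<in> run_confs" unfolding crossing_plus_def by auto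
      show "r \<in> {k - 1}"
      proof (rule ccontr)
        assume "r \<notin> {k - 1}"
        then obtain c' where "run_step (r, Suc (length v)) c'" using run_confs_succ[OF rV] by auto
        then show False using step_cases[of r "Suc (length v)" "fst c'" "snd c'"] by auto
      qed
    qed
  qed
  moreover have "crossing_minus (length v) = {}"
  proof -
    have False if sV: "(s, length v) \<in> run_confs" and ks: "k \<le> s" for s
    proof -
      have "(s, length v) \<noteq> (0, 0)" using ks two_le_k by auto
      then obtain c0 where "run_step c0 (s, length v)" using run_confs_pred[OF sV] by auto
      then show False using step_cases[of "fst c0" "snd c0" s "length v"] ks two_le_k by auto
    qed
    then show ?thesis unfolding crossing_minus_def by auto
  qed
  ultimately show ?thesis unfolding crossing_def by simp
qed

theorem n_letters_le_length: "n_letters \<le> length v"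
proof -
  obtain i where i: "i \<le> length v" "i < length seqs" "set (seqs ! i) = {k - 1}"
    using crossing_invariant[of "length v"] crossing_end by auto
  then have "seqs ! i = seqs ! n_letters"
    using alt_seq_eqI[OF alt_seq_seqs[OF i(2)]] alt_seq_singletons(2) seqs_last by simp
  then have "n_letters \<le> i" using seqs_index_mono[of n_letters i] i(2) length_seqs_n_letters by simp
  then show ?thesis using i(1) by simp
qed

end

theorem theorem3:
  fixes k l :: nat
  assumes "k \<ge> 2"
  shows "\<exists>A Qp Qm. wf_tdfa A \<and> direction_determinate_wrt A Qp Qm
           \<and> card Qp = k \<and> card Qm = l
           \<and> (\<exists>w. accepts A w)
           \<and> (\<exists>w. accepts A w \<and> length w = ((k + l) choose (l + 1)) - 1
                \<and> (\<forall>v. accepts A v \<longrightarrow> length w \<le> length v))"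
proof -
  interpret witness k l using assms by unfold_locales
  have shortest: "length witness_word \<le> length v" if "accepts witness_tdfa v" for v
  proof -
    interpret accepting_run k l v using that by unfold_locales
    show ?thesis using n_letters_le_length by simp
  qed
  have "length witness_word = ((k + l) choose (l + 1)) - 1"
    using length_seqs n_letters_def by simp
  then show ?thesis
    using wf_witness_tdfa direction_determinate_witness_tdfa accepts_witness_word shortest
    by (intro exI[of _ witness_tdfa] exI[of _ "{0..<k}"] exI[of _ "{k..<k+l}"]) auto
qed

end
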